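(* Let $A=[A_{ij}]\in\{0,1\}^{m\times m}$ be an invertible matrix each of whose rows has at most two non-zero entries. Then every entry of $A^{-1}$ lies in $\{0,\pm1,\pm\tfrac12\}$. *)

theory Defs
  imports "HOL-Analysis.Analysis"
begin

end

theory Submission
  imports Defs
begin

text \<open>
  Fix a column \<open>x\<close> of \<open>A\<inverse>\<close>, so \<open>A x = e\<^sub>c\<close>, and a nonzero entry \<open>x\<^sub>i\<close>.
  A row \<open>r \<noteq> c\<close> of \<open>A\<close> says that \<open>x\<close> vanishes at one coordinate or
  that two coordinates of \<open>x\<close> are opposite; either way the same holds for
  the vector \<open>y\<close> obtained from \<open>x\<close> by keeping only the entries of absolute
  value \<open>\<bar>x\<^sub>i\<bar>\<close>. Hence \<open>A y\<close> is a multiple of \<open>e\<^sub>c\<close>, so \<open>y\<close> is a multiple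
  of \<open>x\<close> by invertibility, and comparing the \<open>i\<close>-th entries gives \<open>y = x\<close>:
  all nonzero entries of \<open>x\<close> have absolute value \<open>\<bar>x\<^sub>i\<bar>\<close>. Row \<open>c\<close> expresses
  \<open>1\<close> as one or two such entries, so \<open>\<bar>x\<^sub>i\<bar>\<close> is \<open>1\<close> or \<open>1/2\<close>.
\<close>

lemma card_le_2_cases:
  assumes "finite S" "card S \<le> 2"
  obtains "S = {}" | p where "S = {p}" | p q where "p \<noteq> q" "S = {p, q}"
proof -
  have "card S = 0 \<or> card S = 1 \<or> card S = 2"
    using assms(2) by linarith
  then show thesis
    using assms(1) that by (auto simp: card_1_singleton_iff card_2_iff)
qed

lemma sum_card_le_2_abs_level_eq_0:
  fixes f :: "'a \<Rightarrow> real"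
  assumes "finite S" "card S \<le> 2" "sum f S = 0"
  shows "(\<Sum>j\<in>S. if \<bar>f j\<bar> = t then f j else 0) = 0"
  using assms(1,2)
proof (cases rule: card_le_2_cases)
  case (3 p q)
  then have "f q = - f p"
    using assms(3) by simp
  then show ?thesis
    using 3 by auto
qed (use assms(3) in auto)

lemma sum_card_le_2_of_pm_eq_1:
  fixes f :: "'a \<Rightarrow> real"
  assumes "finite S" "card S \<le> 2" "sum f S = 1" "\<forall>j\<in>S. f j \<in> {0, t, -t}"
  shows "\<bar>t\<bar> = 1 \<or> \<bar>t\<bar> = 1/2"
  using assms(1,2)
proof (cases rule: card_le_2_cases)
  case (3 p q)
  then have "f p + f q = 1" "f p \<in> {0, t, -t}" "f q \<in> {0, t, -t}"
    using assms(3,4) by auto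
  then show ?thesis
    by (auto simp: abs_if)
qed (use assms(3,4) in \<open>auto simp: abs_if\<close>)

lemma matrix_vector_mult_01_row:
  fixes A :: "real ^ 'n ^ 'm"
  assumes "\<forall>j. A $ r $ j \<in> {0, 1}"
  shows "(A *v v) $ r = (\<Sum>j | A $ r $ j \<noteq> 0. v $ j)"
proof -
  have "(A *v v) $ r = (\<Sum>j | A $ r $ j \<noteq> 0. A $ r $ j * v $ j)"
    by (simp add: matrix_vector_mult_def) (rule sum.mono_neutral_right; auto)
  also have "\<dots> = (\<Sum>j | A $ r $ j \<noteq> 0. v $ j)"
    using assms by (intro sum.cong refl) force
  finally show ?thesis .
qed

lemma matrix_mult_matrix_inv_right:
  fixes A :: "'a::semiring_1 ^ 'n ^ 'm"
  assumes "invertible A"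
  shows "A ** matrix_inv A = mat 1"
  using someI_ex[OF assms[unfolded invertible_def]] by (simp add: matrix_inv_def)

lemma solution_of_axis_entries_equal_abs:
  fixes A :: "real ^ 'n ^ 'n"
  assumes entries01: "\<forall>i j. A $ i $ j \<in> {0, 1}"
    and rows: "\<forall>i. card {j. A $ i $ j \<noteq> 0} \<le> 2"
    and inj: "inj ((*v) A)"
    and sol: "A *v x = axis c 1"
    and nonzero: "x $ i \<noteq> 0"
  shows "x $ j \<in> {0, x $ i, - x $ i}"
proof -
  define y where "y = (\<chi> j. if \<bar>x $ j\<bar> = \<bar>x $ i\<bar> then x $ j else 0)"
  define l where "l = (A *v y) $ c"
  have "A *v y = A *v (l *s x)"
  unfolding vec_eq_iff
  proof
    fix r
    show "(A *v y) $ r = (A *v (l *s x)) $ r"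
    proof (cases "r = c")
      case False
      then have "(\<Sum>j | A $ r $ j \<noteq> 0. x $ j) = 0"
        using sol matrix_vector_mult_01_row[of A r x] entries01
        by (auto simp: axis_def)
      then have "(\<Sum>j | A $ r $ j \<noteq> 0. y $ j) = 0"
        unfolding y_def using rows by (simp add: sum_card_le_2_abs_level_eq_0)
      then show ?thesis
        using False sol matrix_vector_mult_01_row[of A r y] entries01
        by (simp add: vector_scalar_commute axis_def)
    qed (simp add: l_def sol vector_scalar_commute axis_def)
  qed
  then have y_eq: "y = l *s x"
    using inj by (simp add: inj_eq)
  have "x $ i = l * x $ i"
    using arg_cong[OF y_eq, of "\<lambda>v. v $ i"] by (simp add: y_def)
  then have "l = 1"
    using nonzero by simp
  then have "x $ j = y $ j"
    using y_eq by simp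
  then show ?thesis
    by (auto simp: y_def abs_if split: if_splits)
qed

theorem lemma1:
  fixes A :: "real ^ 'm ^ 'm"
  assumes entries01: "\<forall>i j. A $ i $ j \<in> {0, 1}"
    and rows: "\<forall>i. card {j. A $ i $ j \<noteq> 0} \<le> 2"
    and inv: "invertible A"
  shows "\<forall>i j. matrix_inv A $ i $ j \<in> {0, 1, -1, 1/2, -1/2}"
proof (intro allI)
  fix i c
  define x where "x = column c (matrix_inv A)"
  have sol: "A *v x = axis c 1"
    by (simp add: x_def matrix_vector_mult_basis[symmetric] matrix_vector_mul_assoc
        matrix_mult_matrix_inv_right[OF inv])
  show "matrix_inv A $ i $ c \<in> {0, 1, -1, 1/2, -1/2}"
  proof (cases "x $ i = 0")
    case False
    have "\<forall>j. x $ j \<in> {0, x $ i, - x $ i}"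
      using solution_of_axis_entries_equal_abs[OF entries01 rows
          inj_matrix_vector_mult[OF inv] sol False] by blast
    moreover have "(\<Sum>j | A $ c $ j \<noteq> 0. x $ j) = 1"
      using sol matrix_vector_mult_01_row[of A c x] entries01 by simp
    ultimately have "\<bar>x $ i\<bar> = 1 \<or> \<bar>x $ i\<bar> = 1/2"
      using rows by (intro sum_card_le_2_of_pm_eq_1) auto
    then show ?thesis
      by (auto simp: x_def column_def abs_if split: if_splits)
  qed (simp add: x_def column_def)
qed

end
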